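(* Let $BT$ be a boosted tree over attributes $A_1,\ldots,A_n$ and $\vec x\in\vec X$. If $t$ is a tree-specific explanation for $\vec x$ given $BT$, then $t$ is an abductive explanation for $\vec x$ given $BT$. (This holds both in the binary case $BT=\{F\}$ and in the multi-class case $BT=\{F^1,\ldots,F^m\}$.)
   Context: Attributes $A_1,\ldots,A_n$: each $A_i$ has a domain $D_i$ which is either a totally ordered set of numbers, a set of unordered (categorical) values, or $\{0,1\}$. An instance is $\vec x=(v_1,\ldots,v_n)$ with $v_i\in D_i$; $\vec X$ is the set of all instances; $t_{\vec x}=\{(A_i=v_i):i\in[n]\}$. An instance $\vec x'$ extends $t$ if $t\subseteq t_{\vec x'}$. A regression tree is a finite binary tree whose internal nodes are labelled by Boolean conditions on single attributes ($A_i>v$, $A_i=v$, or $A_i=1$ depending on the attribute type) and whose leaves are labelled by real numbers; $w(T,\vec x)$ is the label of the leaf reached by following, from the root, the branch determined by whether $\vec x$ satisfies each node's condition. For a tree $T$ and $t\subseteq t_{\vec x}$: $w_\downarrow(t,T)=\min\{w(T,\vec x'):\vec x'\text{ extends }t\}$ and $w_\uparrow(t,T)=\max\{w(T,\vec x'):\vec x'\text{ extends }t\}$. A forest $F=\{T_1,\ldots,T_p\}$ has weight $w(F,\vec x)=\sum_k w(T_k,\vec x)$. Binary case: $BT=\{F\}$, $BT(\vec x)=1$ if $w(F,\vec x)>0$, else $0$. Multi-class case: $BT=\{F^1,\ldots,F^m\}$, $m>1$, $F^j=\{T^j_1,\ldots,T^j_{p_j}\}$; $BT(\vec x)=j$ iff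 $w(F^j,\vec x)>w(F^k,\vec x)$ for all $k\neq j$, and $BT(\vec x)$ is a preset element of $[m]$ if all $w(F^j,\vec x)$ are equal. Abductive explanation: $t\subseteq t_{\vec x}$ such that every $\vec x'$ extending $t$ has $BT(\vec x')=BT(\vec x)$. Tree-specific explanation, binary case: if $BT(\vec x)=1$, $t\subseteq t_{\vec x}$ with $\sum_{k=1}^p w_\downarrow(t,T_k)>0$ and no proper subset of $t$ satisfying this; if $BT(\vec x)=0$, $t\subseteq t_{\vec x}$ with $\sum_{k=1}^p w_\uparrow(t,T_k)\le 0$ and no proper subset satisfying this. Multi-class case with $BT(\vec x)=i$: $t\subseteq t_{\vec x}$ such that for every $j\in[m]\setminus\{i\}$, $\sum_{k=1}^{p_i}w_\downarrow(t,T^i_k)>\sum_{k=1}^{p_j}w_\uparrow(t,T^j_k)$, and no proper subset of $t$ satisfies this condition. *)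

theory Defs
  imports Main "HOL.Real"
begin

text \<open>Attributes are indexed 0..n-1; every attribute value is a real number
 (categorical values are encoded as reals and only tested for equality).\<close>

datatype akind = Ordered | Categorical | Boolean

type_synonym inst = "nat \<Rightarrow> real"

definition is_inst :: "(nat \<Rightarrow> real set) \<Rightarrow> nat \<Rightarrow> inst \<Rightarrow> bool" where
  "is_inst D n x \<longleftrightarrow> (\<forall>i<n. x i \<in> D i) \<and> (\<forall>i\<ge>n. x i = 0)"

definition term_of :: "nat \<Rightarrow> inst \<Rightarrow> (nat \<times> real) set" where
  "term_of n x = {(i, x i) | i. i < n}"

definition extends :: "(nat \<Rightarrow> real set) \<Rightarrow> nat \<Rightarrow> (nat \<times> real) set \<Rightarrow> inst \<Rightarrow> bool" where
  "extends D n t x' \<longleftrightarrow> is_inst D n x' \<and> t \<subseteq> term_of n x'"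

datatype cond = Gt nat real | Eq nat real | IsOne nat

fun sat :: "cond \<Rightarrow> inst \<Rightarrow> bool" where
  "sat (Gt i v) x = (x i > v)"
| "sat (Eq i v) x = (x i = v)"
| "sat (IsOne i) x = (x i = 1)"

fun wf_cond :: "(nat \<Rightarrow> akind) \<Rightarrow> nat \<Rightarrow> cond \<Rightarrow> bool" where
  "wf_cond K n (Gt i v) = (i < n \<and> K i = Ordered)"
| "wf_cond K n (Eq i v) = (i < n \<and> K i = Categorical)"
| "wf_cond K n (IsOne i) = (i < n \<and> K i = Boolean)"

datatype rtree = Leaf real | Node cond rtree rtree

fun wf_tree :: "(nat \<Rightarrow> akind) \<Rightarrow> nat \<Rightarrow> rtree \<Rightarrow> bool" where
  "wf_tree K n (Leaf r) = True"
| "wf_tree K n (Node c l r) = (wf_cond K n c \<and> wf_tree K n l \<and> wf_tree K n r)"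

fun w :: "rtree \<Rightarrow> inst \<Rightarrow> real" where
  "w (Leaf r) x = r"
| "w (Node c l r) x = (if sat c x then w l x else w r x)"

definition wf_attrs :: "(nat \<Rightarrow> akind) \<Rightarrow> (nat \<Rightarrow> real set) \<Rightarrow> nat \<Rightarrow> bool" where
  "wf_attrs K D n \<longleftrightarrow> (\<forall>i<n. K i = Boolean \<longrightarrow> D i = {0, 1})"

definition wdown :: "(nat \<Rightarrow> real set) \<Rightarrow> nat \<Rightarrow> (nat \<times> real) set \<Rightarrow> rtree \<Rightarrow> real" where
  "wdown D n t T = Min ((\<lambda>x'. w T x') ` {x'. extends D n t x'})"

definition wup :: "(nat \<Rightarrow> real set) \<Rightarrow> nat \<Rightarrow> (nat \<times> real) set \<Rightarrow> rtree \<Rightarrow> real" where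
  "wup D n t T = Max ((\<lambda>x'. w T x') ` {x'. extends D n t x'})"

definition wF :: "rtree list \<Rightarrow> inst \<Rightarrow> real" where
  "wF F x = sum_list (map (\<lambda>T. w T x) F)"

text \<open>Boosted trees: binary case {F}, or multi-class case F^1..F^m given as a list
 (class j corresponds to Fs ! (j-1)) together with the preset default class.\<close>
datatype bt = Binary "rtree list" | Multi "rtree list list" nat

definition wf_bt :: "(nat \<Rightarrow> akind) \<Rightarrow> nat \<Rightarrow> bt \<Rightarrow> bool" where
  "wf_bt K n B = (case B of
      Binary F \<Rightarrow> (\<forall>T\<in>set F. wf_tree K n T)
    | Multi Fs d \<Rightarrow> length Fs > 1 \<and> d \<in> {1..length Fs} \<and> (\<forall>F\<in>set Fs. \<forall>T\<in>set F. wf_tree K n T))"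

definition is_winner :: "rtree list list \<Rightarrow> inst \<Rightarrow> nat \<Rightarrow> bool" where
  "is_winner Fs x j \<longleftrightarrow> j \<in> {1..length Fs} \<and>
     (\<forall>k\<in>{1..length Fs}. k \<noteq> j \<longrightarrow> wF (Fs ! (j-1)) x > wF (Fs ! (k-1)) x)"

fun classify :: "bt \<Rightarrow> inst \<Rightarrow> nat" where
  "classify (Binary F) x = (if wF F x > 0 then 1 else 0)"
| "classify (Multi Fs d) x = (if \<exists>j. is_winner Fs x j then (THE j. is_winner Fs x j) else d)"

definition abductive :: "(nat \<Rightarrow> real set) \<Rightarrow> nat \<Rightarrow> bt \<Rightarrow> inst \<Rightarrow> (nat \<times> real) set \<Rightarrow> bool" where
  "abductive D n B x t \<longleftrightarrow> t \<subseteq> term_of n x \<and>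
     (\<forall>x'. extends D n t x' \<longrightarrow> classify B x' = classify B x)"

definition ts_cond :: "(nat \<Rightarrow> real set) \<Rightarrow> nat \<Rightarrow> bt \<Rightarrow> inst \<Rightarrow> (nat \<times> real) set \<Rightarrow> bool" where
  "ts_cond D n B x t = (case B of
      Binary F \<Rightarrow> (if classify B x = 1
                   then (\<Sum>T\<leftarrow>F. wdown D n t T) > 0
                   else (\<Sum>T\<leftarrow>F. wup D n t T) \<le> 0)
    | Multi Fs d \<Rightarrow> (let i = classify B x in
         \<forall>j\<in>{1..length Fs} - {i}.
            (\<Sum>T\<leftarrow>Fs ! (i-1). wdown D n t T) > (\<Sum>T\<leftarrow>Fs ! (j-1). wup D n t T)))"

definition tree_specific :: "(nat \<Rightarrow> real set) \<Rightarrow> nat \<Rightarrow> bt \<Rightarrow> inst \<Rightarrow> (nat \<times> real) set \<Rightarrow> bool" where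
  "tree_specific D n B x t \<longleftrightarrow> t \<subseteq> term_of n x \<and> ts_cond D n B x t \<and>
     (\<forall>t'. t' \<subset> t \<longrightarrow> \<not> ts_cond D n B x t')"

end

theory Submission
  imports Defs
begin

text \<open>Every extension \<open>x'\<close> of \<open>t\<close> is among the instances over which \<open>w\<^sub>\<down>\<close> and \<open>w\<^sup>\<up>\<close> are
  taken, so each tree weight satisfies \<open>w\<^sub>\<down>(t,T) \<le> w(T,x') \<le> w\<^sup>\<up>(t,T)\<close>, and summing over
  the forests turns the inequalities defining a tree-specific explanation into the
  inequalities deciding the class of \<open>x'\<close>.\<close>

fun leaves :: "rtree \<Rightarrow> real set" where
  "leaves (Leaf r) = {r}"
| "leaves (Node c l r) = leaves l \<union> leaves r"

lemma w_in_leaves: "w T x \<in> leaves T"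
  by (induction T) auto

lemma finite_leaves: "finite (leaves T)"
  by (induction T) auto

lemma finite_image_w: "finite ((\<lambda>x. w T x) ` S)"
  by (rule finite_subset[OF _ finite_leaves[of T]]) (auto simp: w_in_leaves)

lemma wdown_le_w: "extends D n t x \<Longrightarrow> wdown D n t T \<le> w T x"
  unfolding wdown_def by (rule Min_le[OF finite_image_w]) auto

lemma w_le_wup: "extends D n t x \<Longrightarrow> w T x \<le> wup D n t T"
  unfolding wup_def by (rule Max_ge[OF finite_image_w]) auto

lemma sum_wdown_le_wF: "extends D n t x \<Longrightarrow> (\<Sum>T\<leftarrow>F. wdown D n t T) \<le> wF F x"
  unfolding wF_def by (rule sum_list_mono) (rule wdown_le_w)

lemma wF_le_sum_wup: "extends D n t x \<Longrightarrow> wF F x \<le> (\<Sum>T\<leftarrow>F. wup D n t T)"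
  unfolding wF_def by (rule sum_list_mono) (rule w_le_wup)

lemma is_winner_unique: "is_winner Fs x j \<Longrightarrow> is_winner Fs x k \<Longrightarrow> j = k"
  unfolding is_winner_def by (metis less_asym)

lemma classify_Multi_winner: "is_winner Fs x j \<Longrightarrow> classify (Multi Fs d) x = j"
  using is_winner_unique by (auto intro: the_equality)

lemma classify_Multi_in_range:
  assumes "d \<in> {1..length Fs}"
  shows "classify (Multi Fs d) x \<in> {1..length Fs}"
proof (cases "\<exists>j. is_winner Fs x j")
  case True
  then obtain j where "is_winner Fs x j" by blast
  then show ?thesis
    using classify_Multi_winner by (auto simp: is_winner_def)
next
  case False
  then have "classify (Multi Fs d) x = d" by auto
  then show ?thesis using assms by simp
qed

lemma classify_Binary_extends:
  assumes "ts_cond D n (Binary F) x t" and "extends D n t x'"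
  shows "classify (Binary F) x' = classify (Binary F) x"
proof (cases "classify (Binary F) x = 1")
  case True
  then have "(\<Sum>T\<leftarrow>F. wdown D n t T) > 0"
    using assms(1) by (simp add: ts_cond_def)
  with sum_wdown_le_wF[OF assms(2), of F] have "wF F x' > 0" by linarith
  then show ?thesis using True by simp
next
  case False
  then have "(\<Sum>T\<leftarrow>F. wup D n t T) \<le> 0"
    using assms(1) by (simp add: ts_cond_def)
  with wF_le_sum_wup[OF assms(2), of F] have "\<not> wF F x' > 0" by linarith
  then show ?thesis using False by auto
qed

lemma classify_Multi_extends:
  assumes "d \<in> {1..length Fs}"
    and "ts_cond D n (Multi Fs d) x t" and "extends D n t x'"
  shows "classify (Multi Fs d) x' = classify (Multi Fs d) x"
proof -
  define i where "i = classify (Multi Fs d) x"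
  have margin: "(\<Sum>T\<leftarrow>Fs ! (i-1). wdown D n t T) > (\<Sum>T\<leftarrow>Fs ! (k-1). wup D n t T)"
    if "k \<in> {1..length Fs}" "k \<noteq> i" for k
    using assms(2) that unfolding ts_cond_def bt.case Let_def i_def[symmetric] by blast
  have "is_winner Fs x' i"
    unfolding is_winner_def
  proof (intro conjI ballI impI)
    show "i \<in> {1..length Fs}"
      unfolding i_def using assms(1) by (rule classify_Multi_in_range)
  next
    fix k assume "k \<in> {1..length Fs}" "k \<noteq> i"
    with margin sum_wdown_le_wF[OF assms(3), of "Fs ! (i-1)"]
      wF_le_sum_wup[OF assms(3), of "Fs ! (k-1)"]
    show "wF (Fs ! (i-1)) x' > wF (Fs ! (k-1)) x'" by fastforce
  qed
  then show ?thesis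
    unfolding i_def by (rule classify_Multi_winner)
qed

theorem proposition4:
  fixes K :: "nat \<Rightarrow> akind" and D :: "nat \<Rightarrow> real set" and n :: nat
    and B :: bt and x :: inst and t :: "(nat \<times> real) set"
  assumes "wf_attrs K D n"
    and "wf_bt K n B"
    and "is_inst D n x"
    and "tree_specific D n B x t"
  shows "abductive D n B x t"
proof -
  have sub: "t \<subseteq> term_of n x" and ts: "ts_cond D n B x t"
    using assms(4) unfolding tree_specific_def by auto
  have "classify B x' = classify B x" if "extends D n t x'" for x'
  proof (cases B)
    case (Binary F)
    then show ?thesis using classify_Binary_extends ts that by simp
  next
    case (Multi Fs d)
    then have "d \<in> {1..length Fs}" using assms(2) by (simp add: wf_bt_def)
    then show ?thesis using classify_Multi_extends Multi ts that by simp
  qed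
  with sub show ?thesis unfolding abductive_def by blast
qed

end
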